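(* Let $\alpha\ge1$. If $P_1,P_2\in\hat E_+$ satisfy the condition $A_\alpha$ for orders $(k_1,l_1)$ and $(k_2,l_2)$ respectively, then $P_1P_2$ satisfies $A_\alpha$ for order $(k_1+k_2,l_1+l_2)$. In particular, if $P_1,P_2$ satisfy $A_\alpha$, then $P_1P_2$ satisfies $A_\alpha$ and $\mathrm{ord}_\Gamma(P_1P_2)=\mathrm{ord}_\Gamma(P_1)+\mathrm{ord}_\Gamma(P_2)$. The same statements hold for $P_1,P_2\in E_+$ with the strong condition $B_\alpha$ in place of $A_\alpha$.
   Context: $k$ is a field of characteristic zero, $R=k[[x_1,x_2]]$, $M=(x_1,x_2)$, $\mathrm{ord}_M(a)=\sup\{n:a\in M^n\}$, $\partial_i=\partial/\partial x_i$. $\hat D_1$: formal series $\sum_{q\ge0}a_q\partial_1^q$, $a_q\in R$, $\mathrm{ord}_M(a_q)\to\infty$; $\hat E_+=\hat D_1((\partial_2^{-1}))$ (Laurent series in $\partial_2^{-1}$, coefficients on the left, Leibniz-rule multiplication); $E_+=R[\partial_1]((\partial_2^{-1}))$. Every $P\in\hat E_+$ is uniquely $P=\sum p_{ij}\partial_1^i\partial_2^j$, $p_{ij}\in R$. $P$ has $\Gamma$-order $\mathrm{ord}_\Gamma(P)=(k,l)$ if $P=\sum_{s\le l}p_s\partial_2^s$ with $p_s\in\hat D_1$, $p_l\in R[\partial_1]$ of $\partial_1$-order $k$. $P$ satisfies $A_\alpha$ for order $(k,l)$ if $\mathrm{ord}_M(p_{ij})\ge i-\alpha(l-j)-k$ whenever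 $i>\alpha(l-j)+k$; $P$ satisfies $A_\alpha$ if it does so for $(k,l)=\mathrm{ord}_\Gamma(P)$. $P\in E_+$ satisfies the strong condition $B_\alpha$ for order $(k,l)$ if $p_{ij}=0$ whenever $i>\alpha(l-j)+k$, and $B_\alpha$ if this holds for $(k,l)=\mathrm{ord}_\Gamma(P)$. *)

theory Defs
  imports Complex_Main "HOL-Library.Extended_Nat"
begin

text \<open>A formal power series in two variables is represented by its coefficient
function: f (a,b) is the coefficient of x1^a x2^b.\<close>
type_synonym 'k ser = "nat \<times> nat \<Rightarrow> 'k"

definition ser_mult :: "'k::comm_ring_1 ser \<Rightarrow> 'k ser \<Rightarrow> 'k ser" where
  "ser_mult f g = (\<lambda>(a,b). \<Sum>c\<le>a. \<Sum>d\<le>b. f (c,d) * g (a - c, b - d))"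

text \<open>ser_deriv m n f is the derivative of f taken m times in x1 and n times in x2.\<close>
definition ser_deriv :: "nat \<Rightarrow> nat \<Rightarrow> 'k::comm_ring_1 ser \<Rightarrow> 'k ser" where
  "ser_deriv m n f = (\<lambda>(a,b). of_nat (pochhammer (a+1) m * pochhammer (b+1) n) * f (a+m, b+n))"

definition in_Mpow :: "'k::zero ser \<Rightarrow> nat \<Rightarrow> bool" where
  "in_Mpow f n \<longleftrightarrow> (\<forall>a b. a + b < n \<longrightarrow> f (a,b) = 0)"

definition ser_ord :: "'k::zero ser \<Rightarrow> enat" where
  "ser_ord f = Sup {enat n | n. in_Mpow f n}"

text \<open>Sum of a family of series which is locally finite coefficientwise (every
family arising below is, for inputs in hat E_+).\<close>
definition ser_sum :: "('i \<Rightarrow> 'k::comm_monoid_add ser) \<Rightarrow> 'k ser" where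
  "ser_sum F = (\<lambda>x. \<Sum>t\<in>{t. F t x \<noteq> 0}. F t x)"

text \<open>An operator P = sum p_ij d1^i d2^j is represented by its coefficients:
P i j = p_ij in R, i :: nat, j :: int.\<close>
type_synonym 'k op = "nat \<Rightarrow> int \<Rightarrow> 'k ser"

definition hatE :: "'k::zero op \<Rightarrow> bool" where
  "hatE P \<longleftrightarrow> (\<exists>L. \<forall>i j. j > L \<longrightarrow> P i j = (\<lambda>_. 0))
     \<and> (\<forall>j N. \<exists>I0. \<forall>i\<ge>I0. enat N \<le> ser_ord (P i j))"

definition Eplus :: "'k::zero op \<Rightarrow> bool" where
  "Eplus P \<longleftrightarrow> (\<exists>L. \<forall>i j. j > L \<longrightarrow> P i j = (\<lambda>_. 0))
     \<and> (\<forall>j. finite {i. P i j \<noteq> (\<lambda>_. 0)})"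

text \<open>Multiplication by the Leibniz rule:
 (a d1^i d2^j)(b d1^i' d2^j') = sum_{m\<le>i, n\<ge>0} C(i,m) C(j,n) a (d1^m d2^n b) d1^(i-m+i') d2^(j-n+j'),
 with the generalized binomial coefficient C(j,n) for j an integer.\<close>
definition op_mult :: "'k::field_char_0 op \<Rightarrow> 'k op \<Rightarrow> 'k op" where
  "op_mult P Q = (\<lambda>I J. ser_sum (\<lambda>(i, m, j, n) x.
      if m \<le> i \<and> i - m \<le> I then
        of_nat (i choose m) * ((of_int j :: 'k) gchoose n) *
        ser_mult (P i j) (ser_deriv m n (Q (I + m - i) (J - j + int n))) x
      else 0))"

text \<open>Gamma-order: P = sum_{s\<le>l} p_s d2^s with p_l in R[d1] of d1-order k.\<close>
definition is_gamma_ord :: "'k::zero op \<Rightarrow> nat \<Rightarrow> int \<Rightarrow> bool" where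
  "is_gamma_ord P k l \<longleftrightarrow> (\<forall>i j. j > l \<longrightarrow> P i j = (\<lambda>_. 0))
     \<and> (\<forall>i. i > k \<longrightarrow> P i l = (\<lambda>_. 0)) \<and> P k l \<noteq> (\<lambda>_. 0)"

definition condA :: "real \<Rightarrow> 'k::zero op \<Rightarrow> nat \<Rightarrow> int \<Rightarrow> bool" where
  "condA \<alpha> P k l \<longleftrightarrow> (\<forall>i j. real i > \<alpha> * real_of_int (l - j) + real k \<longrightarrow>
      (case ser_ord (P i j) of
         enat n \<Rightarrow> real n \<ge> real i - \<alpha> * real_of_int (l - j) - real k
       | \<infinity> \<Rightarrow> True))"

definition condB :: "real \<Rightarrow> 'k::zero op \<Rightarrow> nat \<Rightarrow> int \<Rightarrow> bool" where
  "condB \<alpha> P k l \<longleftrightarrow> (\<forall>i j. real i > \<alpha> * real_of_int (l - j) + real k \<longrightarrow> P i j = (\<lambda>_. 0))"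

end

theory Submission
  imports Defs
begin

(* Everything is reduced to coefficient supports.  First, ord_M f >= t just
   says that f has no monomial of total degree below t; so A_alpha and B_alpha
   become explicit vanishing conditions on the coefficients p_ij(a,b).
   Second, by the Leibniz formula a coefficient of P*Q can only be nonzero if
   some summand p_ij * d1^m d2^n q_(i',j') is, which exhibits nonzero
   coefficients of P and Q whose indices are related by i' = I + m - i,
   j' = J - j + n.  For such a pair the "defects" of A_alpha add up, with an
   extra gain (alpha - 1) n >= 0; this is where alpha >= 1 is needed (for
   B_alpha, alpha >= 0 suffices).  Finally, for Gamma-orders only one summand
   contributes to the leading coefficient of P*Q, which is thus the product
   p_(k1 l1) q_(k2 l2) of two nonzero elements of the domain k[[x1,x2]]. *)

lemma in_Mpow_mono: "in_Mpow f n \<Longrightarrow> m \<le> n \<Longrightarrow> in_Mpow f m"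
  unfolding in_Mpow_def by auto

text \<open>Since the sets M^n decrease, ord_M f \<ge> n exactly when f \<in> M^n.\<close>
lemma enat_le_ser_ord_iff: "enat n \<le> ser_ord f \<longleftrightarrow> in_Mpow f n"
proof
  assume "in_Mpow f n"
  then show "enat n \<le> ser_ord f" unfolding ser_ord_def by (auto intro: Sup_upper)
next
  assume le: "enat n \<le> ser_ord f"
  show "in_Mpow f n"
  proof (cases n)
    case 0
    then show ?thesis by (simp add: in_Mpow_def)
  next
    case (Suc p)
    then have "enat p < enat n" by simp
    then have "enat p < Sup {enat n | n. in_Mpow f n}"
      using le unfolding ser_ord_def by (rule less_le_trans)
    then obtain q where "in_Mpow f q" "p < q" by (auto simp: less_Sup_iff)
    then show ?thesis using Suc in_Mpow_mono[of f q "Suc p"] by simp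
  qed
qed

text \<open>The form in which ord_M occurs in A_alpha: a lower bound t on the order
  means that all coefficients of total degree below t vanish.\<close>
lemma ser_ord_bound_iff:
  "(case ser_ord f of enat n \<Rightarrow> real n \<ge> t | \<infinity> \<Rightarrow> True)
     \<longleftrightarrow> (\<forall>a b. real (a + b) < t \<longrightarrow> f (a,b) = 0)"
proof -
  have "(case ser_ord f of enat n \<Rightarrow> real n \<ge> t | \<infinity> \<Rightarrow> True) \<longleftrightarrow> enat (nat \<lceil>t\<rceil>) \<le> ser_ord f"
    by (cases "ser_ord f") simp_all
  also have "\<dots> \<longleftrightarrow> in_Mpow f (nat \<lceil>t\<rceil>)"
    by (rule enat_le_ser_ord_iff)
  also have "\<dots> \<longleftrightarrow> (\<forall>a b. real (a + b) < t \<longrightarrow> f (a,b) = 0)"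
  proof -
    have "\<And>m. m < nat \<lceil>t\<rceil> \<longleftrightarrow> real m < t" by linarith
    then show ?thesis unfolding in_Mpow_def by simp
  qed
  finally show ?thesis .
qed

definition mult_term :: "'k::field_char_0 op \<Rightarrow> 'k op \<Rightarrow> nat \<Rightarrow> int \<Rightarrow> nat \<times> nat \<times> int \<times> nat \<Rightarrow> 'k ser"
  where "mult_term P Q I J = (\<lambda>(i, m, j, n) x.
      if m \<le> i \<and> i - m \<le> I then
        of_nat (i choose m) * ((of_int j :: 'k) gchoose n) *
        ser_mult (P i j) (ser_deriv m n (Q (I + m - i) (J - j + int n))) x
      else 0)"

lemma op_mult_eq_ser_sum: "op_mult P Q I J = ser_sum (mult_term P Q I J)"
  unfolding op_mult_def mult_term_def ..

lemma ser_sum_nonzero_term: "ser_sum F x \<noteq> 0 \<Longrightarrow> \<exists>t. F t x \<noteq> 0"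
  unfolding ser_sum_def by (metis (mono_tags, lifting) empty_Collect_eq sum.empty)

lemma ser_sum_single:
  assumes "\<And>t. t \<noteq> t0 \<Longrightarrow> F t x = 0"
  shows "ser_sum F x = F t0 x"
proof -
  have "{t. F t x \<noteq> 0} = (if F t0 x = 0 then {} else {t0})"
    using assms by force
  then show ?thesis unfolding ser_sum_def by simp
qed

text \<open>A summand can only contribute to the coefficient of x1^a x2^b if p_ij has
  a nonzero coefficient at some (c,d) \<le> (a,b) and q_(I+m-i, J-j+n) has one at
  (a-c+m, b-d+n), the monomial that d1^m d2^n moves to degree (a-c, b-d).\<close>
lemma mult_term_support:
  assumes "mult_term P Q I J (i,m,j,n) (a,b) \<noteq> 0"
  shows "m \<le> i \<and> i - m \<le> I \<and> (\<exists>c d. c \<le> a \<and> d \<le> b \<and> P i j (c,d) \<noteq> 0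
          \<and> Q (I+m-i) (J-j+int n) (a-c+m, b-d+n) \<noteq> 0)"
proof -
  have range: "m \<le> i \<and> i - m \<le> I"
    using assms by (auto simp: mult_term_def split: if_splits)
  then have "ser_mult (P i j) (ser_deriv m n (Q (I + m - i) (J - j + int n))) (a,b) \<noteq> 0"
    using assms by (auto simp: mult_term_def)
  then obtain c d where cd: "c \<le> a" "d \<le> b"
    and nz: "P i j (c,d) * ser_deriv m n (Q (I + m - i) (J - j + int n)) (a-c,b-d) \<noteq> 0"
    unfolding ser_mult_def by (auto elim!: sum.not_neutral_contains_not_neutral)
  have "P i j (c,d) \<noteq> 0" "Q (I+m-i) (J-j+int n) (a-c+m, b-d+n) \<noteq> 0"
    using nz by (auto simp: ser_deriv_def)
  then show ?thesis using range cd by blast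
qed

lemma op_mult_support:
  assumes "op_mult P Q I J (a,b) \<noteq> 0"
  obtains i m j n c d where "m \<le> i" "i - m \<le> I" "c \<le> a" "d \<le> b" "P i j (c,d) \<noteq> 0"
    "Q (I+m-i) (J-j+int n) (a-c+m, b-d+n) \<noteq> 0"
proof -
  obtain t where "mult_term P Q I J t (a,b) \<noteq> 0"
    using assms ser_sum_nonzero_term by (metis op_mult_eq_ser_sum)
  moreover obtain i m j n where "t = (i,m,j,n)" by (cases t) auto
  ultimately show ?thesis using mult_term_support that by blast
qed

text \<open>A_alpha as a vanishing condition: p_ij has no monomial of total degree
  below i - alpha(l-j) - k.  (The guard i > alpha(l-j) + k in the definition is
  implied, degrees being nonnegative.)\<close>
lemma condA_iff:
  "condA \<alpha> P k l \<longleftrightarrow>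
     (\<forall>i j a b. real (a+b) < real i - \<alpha> * real_of_int (l - j) - real k \<longrightarrow> P i j (a,b) = 0)"
  unfolding condA_def ser_ord_bound_iff
proof (intro iffI allI impI)
  fix i j a b
  assume A: "\<forall>i j. real i > \<alpha> * real_of_int (l - j) + real k \<longrightarrow>
      (\<forall>a b. real (a+b) < real i - \<alpha> * real_of_int (l - j) - real k \<longrightarrow> P i j (a,b) = 0)"
    and low: "real (a+b) < real i - \<alpha> * real_of_int (l - j) - real k"
  then have "real i > \<alpha> * real_of_int (l - j) + real k" by linarith
  then show "P i j (a,b) = 0" using A low by blast
qed blast

lemma condA_bound:
  "condA \<alpha> P k l \<Longrightarrow> P i j (c,d) \<noteq> 0 \<Longrightarrow> real i - \<alpha> * real_of_int (l - j) - real k \<le> real (c+d)"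
  unfolding condA_iff by (meson not_le)

lemma condB_bound:
  "condB \<alpha> P k l \<Longrightarrow> P i j x \<noteq> 0 \<Longrightarrow> real i \<le> \<alpha> * real_of_int (l - j) + real k"
  unfolding condB_def by (metis not_le)

text \<open>The alpha-weighted d2-defects l - j of the two factors of a summand add up
  to that of the product, up to the shift by n coming from d2^n acting on q.\<close>
lemma leibniz_exponent_split:
  fixes \<alpha> :: real
  shows "\<alpha> * real_of_int (l2 - (J - j + int n))
           = \<alpha> * real_of_int (l1 + l2 - J) - \<alpha> * real_of_int (l1 - j) - \<alpha> * real n"
  by (simp add: algebra_simps)

text \<open>Lemma 9 for A_alpha.  The defects of A_alpha of the two factors add up,
  and the derivative d2^n contributes the additional gain (alpha - 1) n.\<close>
lemma condA_op_mult:
  fixes P Q :: "'k::field_char_0 op"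
  assumes \<alpha>: "\<alpha> \<ge> 1" and AP: "condA \<alpha> P k1 l1" and AQ: "condA \<alpha> Q k2 l2"
  shows "condA \<alpha> (op_mult P Q) (k1 + k2) (l1 + l2)"
  unfolding condA_iff
proof (intro allI impI, rule ccontr)
  fix I J a b
  assume low: "real (a+b) < real I - \<alpha> * real_of_int (l1 + l2 - J) - real (k1 + k2)"
    and nz: "op_mult P Q I J (a,b) \<noteq> 0"
  from nz obtain i m j n c d where idx: "m \<le> i" "i - m \<le> I" "c \<le> a" "d \<le> b"
    and nzP: "P i j (c,d) \<noteq> 0" and nzQ: "Q (I+m-i) (J-j+int n) (a-c+m, b-d+n) \<noteq> 0"
    by (rule op_mult_support)
  have boundP: "real i - \<alpha> * real_of_int (l1 - j) - real k1 \<le> real (c+d)"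
    using condA_bound[OF AP nzP] .
  have boundQ: "real (I+m-i) - \<alpha> * real_of_int (l2 - (J-j+int n)) - real k2
      \<le> real ((a-c+m) + (b-d+n))"
    using condA_bound[OF AQ nzQ] .
  have gain: "real n \<le> \<alpha> * real n"
    using \<alpha> by (simp add: mult_right_mono[of 1 \<alpha> "real n", simplified])
  show False
    using low boundP boundQ gain idx leibniz_exponent_split[of \<alpha> l2 J j n l1]
    by (simp add: of_nat_diff)
qed

lemma condB_op_mult:
  fixes P Q :: "'k::field_char_0 op"
  assumes \<alpha>: "\<alpha> \<ge> 0" and BP: "condB \<alpha> P k1 l1" and BQ: "condB \<alpha> Q k2 l2"
  shows "condB \<alpha> (op_mult P Q) (k1 + k2) (l1 + l2)"
  unfolding condB_def
proof (intro allI impI ext, rule ccontr)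
  fix I J and x :: "nat \<times> nat"
  assume high: "real I > \<alpha> * real_of_int (l1 + l2 - J) + real (k1 + k2)"
    and "op_mult P Q I J x \<noteq> 0"
  moreover obtain a b where "x = (a,b)" by (cases x)
  ultimately obtain i m j n c d where idx: "m \<le> i" "i - m \<le> I"
    and nzP: "P i j (c,d) \<noteq> 0" and nzQ: "Q (I+m-i) (J-j+int n) (a-c+m, b-d+n) \<noteq> 0"
    by (metis op_mult_support)
  have boundP: "real i \<le> \<alpha> * real_of_int (l1 - j) + real k1"
    using condB_bound[OF BP nzP] .
  have boundQ: "real (I+m-i) \<le> \<alpha> * real_of_int (l2 - (J-j+int n)) + real k2"
    using condB_bound[OF BQ nzQ] .
  have "0 \<le> \<alpha> * real n" using \<alpha> by simp
  then show False
    using high boundP boundQ idx leibniz_exponent_split[of \<alpha> l2 J j n l1]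
    by (simp add: of_nat_diff)
qed

lemma gamma_ord_support:
  "is_gamma_ord P k l \<Longrightarrow> P i j x \<noteq> 0 \<Longrightarrow> j \<le> l \<and> (j = l \<longrightarrow> i \<le> k)"
  unfolding is_gamma_ord_def by (metis not_le)

lemma lex_least_support:
  fixes f :: "'k::zero ser"
  assumes "f \<noteq> (\<lambda>_. 0)"
  obtains a0 b0 where "f (a0,b0) \<noteq> 0" "\<And>c d. f (c,d) \<noteq> 0 \<Longrightarrow> a0 \<le> c"
    "\<And>d. f (a0,d) \<noteq> 0 \<Longrightarrow> b0 \<le> d"
proof -
  from assms obtain a b where "f (a,b) \<noteq> 0" by (metis ext surj_pair)
  define a0 where "a0 = (LEAST a. \<exists>b. f (a,b) \<noteq> 0)"
  have "\<exists>b. f (a0,b) \<noteq> 0"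
    unfolding a0_def by (rule LeastI_ex) (use \<open>f (a,b) \<noteq> 0\<close> in blast)
  define b0 where "b0 = (LEAST b. f (a0,b) \<noteq> 0)"
  have "f (a0,b0) \<noteq> 0" unfolding b0_def using \<open>\<exists>b. f (a0,b) \<noteq> 0\<close> by (rule LeastI_ex)
  moreover have "\<And>c d. f (c,d) \<noteq> 0 \<Longrightarrow> a0 \<le> c" unfolding a0_def by (auto intro: Least_le)
  moreover have "\<And>d. f (a0,d) \<noteq> 0 \<Longrightarrow> b0 \<le> d" unfolding b0_def by (auto intro: Least_le)
  ultimately show ?thesis using that by blast
qed

text \<open>The coefficient of fg at the sum of the lexicographically least monomials
  of f and g is the product of their coefficients: no other pair of monomials
  adds up to it.\<close>
lemma ser_mult_at_lex_least:
  fixes f g :: "'k::comm_ring_1 ser"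
  assumes fa: "\<And>c d. f (c,d) \<noteq> 0 \<Longrightarrow> a0 \<le> c" and fb: "\<And>d. f (a0,d) \<noteq> 0 \<Longrightarrow> b0 \<le> d"
    and ga: "\<And>c d. g (c,d) \<noteq> 0 \<Longrightarrow> a1 \<le> c" and gb: "\<And>d. g (a1,d) \<noteq> 0 \<Longrightarrow> b1 \<le> d"
  shows "ser_mult f g (a0+a1, b0+b1) = f (a0,b0) * g (a1,b1)"
proof -
  have row: "(\<Sum>d\<le>b0+b1. f (c,d) * g (a0+a1-c, b0+b1-d)) = 0" if "c \<le> a0+a1" "c \<noteq> a0" for c
  proof (rule sum.neutral, rule ballI)
    fix d
    show "f (c,d) * g (a0+a1-c, b0+b1-d) = 0"
    proof (cases "f (c,d) = 0")
      case False
      then have "a0 < c" using fa that(2) by force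
      then have "g (a0+a1-c, b0+b1-d) = 0" using ga[of "a0+a1-c"] that(1) by force
      then show ?thesis by simp
    qed simp
  qed
  have entry: "f (a0,d) * g (a1, b0+b1-d) = 0" if "d \<le> b0+b1" "d \<noteq> b0" for d
  proof (cases "f (a0,d) = 0")
    case False
    then have "b0 < d" using fb that(2) by force
    then have "g (a1, b0+b1-d) = 0" using gb[of "b0+b1-d"] that(1) by force
    then show ?thesis by simp
  qed simp
  have "ser_mult f g (a0+a1, b0+b1) = (\<Sum>d\<le>b0+b1. f (a0,d) * g (a1, b0+b1-d))"
    unfolding ser_mult_def using row by (simp add: sum.mono_neutral_right[of "{..a0+a1}" "{a0}"])
  also have "\<dots> = f (a0,b0) * g (a1,b1)"
    using entry by (simp add: sum.mono_neutral_right[of "{..b0+b1}" "{b0}"])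
  finally show ?thesis .
qed

lemma ser_mult_nonzero:
  fixes f g :: "'k::idom ser"
  assumes "f \<noteq> (\<lambda>_. 0)" "g \<noteq> (\<lambda>_. 0)"
  shows "ser_mult f g \<noteq> (\<lambda>_. 0)"
proof -
  obtain a0 b0 where "f (a0,b0) \<noteq> 0" "\<And>c d. f (c,d) \<noteq> 0 \<Longrightarrow> a0 \<le> c"
    "\<And>d. f (a0,d) \<noteq> 0 \<Longrightarrow> b0 \<le> d" using lex_least_support[OF assms(1)] by blast
  moreover obtain a1 b1 where "g (a1,b1) \<noteq> 0" "\<And>c d. g (c,d) \<noteq> 0 \<Longrightarrow> a1 \<le> c"
    "\<And>d. g (a1,d) \<noteq> 0 \<Longrightarrow> b1 \<le> d" using lex_least_support[OF assms(2)] by blast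
  ultimately have "ser_mult f g (a0+a1, b0+b1) \<noteq> 0"
    using ser_mult_at_lex_least[of f a0 b0 g a1 b1] by simp
  then show ?thesis by (metis fun_eq_iff)
qed

lemma gamma_ord_mult_term_indices:
  assumes GP: "is_gamma_ord P k1 l1" and GQ: "is_gamma_ord Q k2 l2"
    and "J \<ge> l1 + l2" "P i j x \<noteq> 0" "Q (I+m-i) (J-j+int n) y \<noteq> 0"
  shows "J = l1 + l2 \<and> j = l1 \<and> n = 0 \<and> i \<le> k1 \<and> I+m-i \<le> k2"
  using gamma_ord_support[OF GP assms(4)] gamma_ord_support[OF GQ assms(5)] assms(3) by auto

text \<open>The leading coefficient of a product is the product of the leading
  coefficients: only the summand (k1, 0, l1, 0) contributes.\<close>
lemma op_mult_leading_coeff: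
  fixes P Q :: "'k::field_char_0 op"
  assumes GP: "is_gamma_ord P k1 l1" and GQ: "is_gamma_ord Q k2 l2"
  shows "op_mult P Q (k1+k2) (l1+l2) = ser_mult (P k1 l1) (Q k2 l2)"
proof
  fix x :: "nat \<times> nat"
  obtain a b where x: "x = (a,b)" by (cases x)
  let ?F = "mult_term P Q (k1+k2) (l1+l2)"
  have "?F t x = 0" if "t \<noteq> (k1, 0, l1, 0)" for t
  proof (rule ccontr)
    obtain i m j n where t: "t = (i,m,j,n)" by (cases t) auto
    assume "?F t x \<noteq> 0"
    then obtain c d where "m \<le> i" "i - m \<le> k1+k2" "P i j (c,d) \<noteq> 0"
      "Q (k1+k2+m-i) (l1+l2-j+int n) (a-c+m, b-d+n) \<noteq> 0"
      using mult_term_support x t by blast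
    then have "t = (k1, 0, l1, 0)"
      using gamma_ord_mult_term_indices[OF GP GQ] t by fastforce
    then show False using that by blast
  qed
  then have "op_mult P Q (k1+k2) (l1+l2) x = ?F (k1, 0, l1, 0) x"
    unfolding op_mult_eq_ser_sum by (rule ser_sum_single)
  also have "\<dots> = ser_mult (P k1 l1) (Q k2 l2) x"
    by (simp add: mult_term_def ser_deriv_def)
  finally show "op_mult P Q (k1+k2) (l1+l2) x = ser_mult (P k1 l1) (Q k2 l2) x" .
qed

lemma gamma_ord_op_mult:
  fixes P Q :: "'k::field_char_0 op"
  assumes GP: "is_gamma_ord P k1 l1" and GQ: "is_gamma_ord Q k2 l2"
  shows "is_gamma_ord (op_mult P Q) (k1 + k2) (l1 + l2)"
proof -
  have vanish: "op_mult P Q I J = (\<lambda>_. 0)" if "J > l1 + l2 \<or> (J = l1 + l2 \<and> I > k1 + k2)" for I J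
  proof (rule ext, rule ccontr)
    fix x :: "nat \<times> nat"
    obtain a b where x: "x = (a,b)" by (cases x)
    assume "op_mult P Q I J x \<noteq> 0"
    then obtain i m j n c d where idx: "m \<le> i" "i - m \<le> I" and nzP: "P i j (c,d) \<noteq> 0"
      and nzQ: "Q (I+m-i) (J-j+int n) (a-c+m, b-d+n) \<noteq> 0"
      unfolding x by (rule op_mult_support)
    have "J \<ge> l1 + l2" using that by auto
    then have "J = l1 + l2 \<and> i \<le> k1 \<and> I+m-i \<le> k2"
      using gamma_ord_mult_term_indices[OF GP GQ _ nzP nzQ] by blast
    then show False using that idx by auto
  qed
  have "P k1 l1 \<noteq> (\<lambda>_. 0)" "Q k2 l2 \<noteq> (\<lambda>_. 0)"
    using GP GQ unfolding is_gamma_ord_def by auto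
  then have "op_mult P Q (k1+k2) (l1+l2) \<noteq> (\<lambda>_. 0)"
    using op_mult_leading_coeff[OF GP GQ] ser_mult_nonzero by metis
  then show ?thesis unfolding is_gamma_ord_def using vanish by auto
qed

theorem lemma9:
  fixes \<alpha> :: real
  assumes "\<alpha> \<ge> 1"
  shows
   "(\<forall>(P1 :: 'k::field_char_0 op) P2 k1 l1 k2 l2.
       hatE P1 \<and> hatE P2 \<and> condA \<alpha> P1 k1 l1 \<and> condA \<alpha> P2 k2 l2 \<longrightarrow>
       condA \<alpha> (op_mult P1 P2) (k1 + k2) (l1 + l2))
  \<and> (\<forall>(P1 :: 'k op) P2 k1 l1 k2 l2.
       hatE P1 \<and> hatE P2 \<and> is_gamma_ord P1 k1 l1 \<and> condA \<alpha> P1 k1 l1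
       \<and> is_gamma_ord P2 k2 l2 \<and> condA \<alpha> P2 k2 l2 \<longrightarrow>
       is_gamma_ord (op_mult P1 P2) (k1 + k2) (l1 + l2)
       \<and> condA \<alpha> (op_mult P1 P2) (k1 + k2) (l1 + l2))
  \<and> (\<forall>(P1 :: 'k op) P2 k1 l1 k2 l2.
       Eplus P1 \<and> Eplus P2 \<and> condB \<alpha> P1 k1 l1 \<and> condB \<alpha> P2 k2 l2 \<longrightarrow>
       condB \<alpha> (op_mult P1 P2) (k1 + k2) (l1 + l2))
  \<and> (\<forall>(P1 :: 'k op) P2 k1 l1 k2 l2.
       Eplus P1 \<and> Eplus P2 \<and> is_gamma_ord P1 k1 l1 \<and> condB \<alpha> P1 k1 l1
       \<and> is_gamma_ord P2 k2 l2 \<and> condB \<alpha> P2 k2 l2 \<longrightarrow>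
       is_gamma_ord (op_mult P1 P2) (k1 + k2) (l1 + l2)
       \<and> condB \<alpha> (op_mult P1 P2) (k1 + k2) (l1 + l2))"
proof -
  have "\<alpha> \<ge> 0" using assms by simp
  then show ?thesis
    using condA_op_mult[OF assms] condB_op_mult gamma_ord_op_mult by blast
qed

end
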